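(* Let $(d,e;m)\in\mathcal{E}$ with $d\geq e$ be obstructive, i.e. there exists a rational $a\geq1$ with $\mu(d,e;m)(a)>\sqrt{a/2}$. Then either $e=d$ or $e=d-1$.
   Context: Weight expansion: for rational $a=p/q\geq1$ in lowest terms with continued fraction $[l_0;l_1,\dots,l_N]$ ($l_N\geq2$ if $N\geq1$), $w(a)=(1^{\times l_0},x_1^{\times l_1},\dots,x_N^{\times l_N})$ with $x_0=1$, $x_1=a-l_0$, $x_i=x_{i-2}-l_{i-1}x_{i-1}$; here $x^{\times l}$ is $x$ repeated $l$ times. One has $\sum w_i^2=a$. The set $\mathcal{E}$: a Cremona transform of an integer tuple $(\delta;n_1,\dots,n_k)$ with $n_1\geq\dots\geq n_k$ is $(2\delta-n_1-n_2-n_3;\delta-n_2-n_3,\delta-n_1-n_3,\delta-n_1-n_2,n_4,\dots,n_k)$; a Cremona move is a Cremona transform followed by a permutation of the entries after the semicolon. $\mathcal{E}$ consists of $(0,0;-1)$ together with all integer tuples $(d,e;m_1,\dots,m_M)$ with $d,e\geq0$, $m_1\geq\dots\geq m_M\geq0$, satisfying $\sum m_i=2(d+e)-1$, $\sum m_i^2=2de+1$, and such that $(d+e-m_1;d-m_1,e-m_1,m_2,\dots,m_M)$ reduces to $(0;-1,0,\dots,0)$ by repeated Cremona moves. $\mu(d,e;m)(a):=\langle m,w(a)\rangle/(d+e)$, with $\langle\cdot,\cdot\rangle$ the Euclidean scalar product after padding with zeros. *)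

theory Defs
  imports Complex_Main "HOL-Library.Multiset"
begin

text \<open>Euclidean algorithm: the continued fraction coefficients [l_0; l_1, ..., l_N]
  of p/q (p, q > 0). This is the standard expansion, with l_N >= 2 whenever N >= 1.\<close>
function cf_nat :: "nat \<Rightarrow> nat \<Rightarrow> nat list" where
  "cf_nat p q = (if q = 0 then [] else
     (p div q) # (if p mod q = 0 then [] else cf_nat q (p mod q)))"
  by auto
termination by (relation "measure (\<lambda>(p, q). q)") auto

declare cf_nat.simps [simp del]

definition cf_rat :: "rat \<Rightarrow> nat list" where
  "cf_rat a = (case quotient_of a of (p, q) \<Rightarrow> cf_nat (nat p) (nat q))"

fun xpair :: "rat \<Rightarrow> nat list \<Rightarrow> nat \<Rightarrow> rat \<times> rat" where
  "xpair a ls 0 = (1, a - of_nat (ls ! 0))"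
| "xpair a ls (Suc i) = (let (u, v) = xpair a ls i in (v, u - of_nat (ls ! Suc i) * v))"

definition wx :: "rat \<Rightarrow> nat \<Rightarrow> rat" where
  "wx a i = fst (xpair a (cf_rat a) i)"

definition weight_expansion :: "rat \<Rightarrow> rat list" where
  "weight_expansion a =
     (let ls = cf_rat a in concat (map (\<lambda>i. replicate (ls ! i) (wx a i)) [0..<length ls]))"

text \<open>Cremona transform of (\<delta>; n_1, ..., n_k) with n_1 \<ge> ... \<ge> n_k, k \<ge> 3.\<close>
definition cremona_transform :: "int \<Rightarrow> int list \<Rightarrow> int \<times> int list" where
  "cremona_transform \<delta> ns =
     (2*\<delta> - ns!0 - ns!1 - ns!2,
      [\<delta> - ns!1 - ns!2, \<delta> - ns!0 - ns!2, \<delta> - ns!0 - ns!1] @ drop 3 ns)"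

definition cremona_move :: "int \<times> int list \<Rightarrow> int \<times> int list \<Rightarrow> bool" where
  "cremona_move t t' =
     (let \<delta> = fst t;
          ns = rev (sort (snd t @ replicate (3 - length (snd t)) 0));
          (\<delta>', ns') = cremona_transform \<delta> ns
      in fst t' = \<delta>' \<and> mset (snd t') = mset ns')"

text \<open>The tuple (0; -1, 0, ..., 0), up to order of entries and number of zeros.\<close>
definition is_reduced_class :: "int \<times> int list \<Rightarrow> bool" where
  "is_reduced_class t = (fst t = 0 \<and> mset (filter (\<lambda>x. x \<noteq> 0) (snd t)) = {#-1#})"

definition reduces_to_exc :: "int \<times> int list \<Rightarrow> bool" where
  "reduces_to_exc t = (\<exists>t'. cremona_move\<^sup>*\<^sup>* t t' \<and> is_reduced_class t')"

definition E_set :: "(int \<times> int \<times> int list) set" where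
  "E_set = {(0, 0, [-1])} \<union>
    {(d, e, m). d \<ge> 0 \<and> e \<ge> 0 \<and> m \<noteq> [] \<and> sorted (rev m) \<and> (\<forall>x\<in>set m. x \<ge> 0)
       \<and> sum_list m = 2*(d+e) - 1
       \<and> sum_list (map (\<lambda>x. x^2) m) = 2*d*e + 1
       \<and> reduces_to_exc (d + e - hd m, [d - hd m, e - hd m] @ tl m)}"

text \<open>Euclidean scalar product after padding with zeros (zip truncation = zero padding).\<close>
definition mu :: "int \<Rightarrow> int \<Rightarrow> int list \<Rightarrow> rat \<Rightarrow> real" where
  "mu d e m a =
     (\<Sum>(x, y)\<leftarrow>zip m (weight_expansion a). real_of_int x * real_of_rat y) / real_of_int (d + e)"

end

theory Submission
  imports Defs "HOL-Analysis.Convex"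
begin

text \<open>By Cauchy--Schwarz, \<open>\<langle>m, w(a)\<rangle>\<^sup>2 \<le> |m|\<^sup>2 |w(a)|\<^sup>2 = (2de + 1) a\<close>, because the weight
  expansion of \<open>a = p/q\<close> lists the side lengths of the squares into which the Euclidean
  algorithm cuts a \<open>p/q \<times> 1\<close> rectangle. Hence an obstructive class satisfies
  \<open>(d + e)\<^sup>2 a / 2 < (2de + 1) a\<close>, i.e. \<open>(d - e)\<^sup>2 < 2\<close>.\<close>

fun euclid_pair :: "rat \<Rightarrow> rat \<Rightarrow> nat list \<Rightarrow> nat \<Rightarrow> rat \<times> rat" where
  "euclid_pair u v ls 0 = (v, u - of_nat (ls ! 0) * v)"
| "euclid_pair u v ls (Suc i) =
     (let (s, t) = euclid_pair u v ls i in (t, s - of_nat (ls ! Suc i) * t))"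

fun square_tiling_area :: "rat \<Rightarrow> rat \<Rightarrow> nat list \<Rightarrow> rat" where
  "square_tiling_area u v [] = 0"
| "square_tiling_area u v (l # ls) = of_nat l * v\<^sup>2 + square_tiling_area v (u - of_nat l * v) ls"

lemma xpair_eq_euclid_pair: "xpair a ls i = euclid_pair a 1 ls i"
  by (induction i) auto

lemma euclid_pair_Cons_Suc: "euclid_pair u v (l # ls) (Suc i) = euclid_pair v (u - of_nat l * v) ls i"
  by (induction i) (auto simp: Let_def split: prod.splits)

lemma sum_euclid_pair_eq_square_tiling_area:
  "(\<Sum>i<length ls. of_nat (ls ! i) * (fst (euclid_pair u v ls i))\<^sup>2) = square_tiling_area u v ls"
proof (induction ls arbitrary: u v)
  case (Cons l ls)
  then show ?case
    by (simp only: length_Cons sum.lessThan_Suc_shift)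
       (simp del: euclid_pair.simps(2) add: euclid_pair_Cons_Suc)
qed simp

lemma square_tiling_area_cf_nat:
  assumes "Q > 0"
  shows "square_tiling_area (of_nat P * c) (of_nat Q * c) (cf_nat P Q) = of_nat P * of_nat Q * c\<^sup>2"
  using assms
proof (induction P Q rule: cf_nat.induct)
  case (1 P Q)
  have P_eq: "(of_nat P :: rat) = of_nat (P div Q) * of_nat Q + of_nat (P mod Q)"
    by (metis div_mult_mod_eq of_nat_add of_nat_mult)
  have remainder: "of_nat P * c - of_nat (P div Q) * (of_nat Q * c) = of_nat (P mod Q) * c"
    by (simp add: P_eq algebra_simps)
  show ?case
  proof (cases "P mod Q = 0")
    case True
    then show ?thesis
      using "1.prems" by (subst cf_nat.simps) (simp add: P_eq power2_eq_square algebra_simps)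
  next
    case False
    then have "square_tiling_area (of_nat Q * c) (of_nat (P mod Q) * c) (cf_nat Q (P mod Q))
        = of_nat Q * of_nat (P mod Q) * c\<^sup>2"
      using "1.IH" "1.prems" by auto
    then show ?thesis
      using "1.prems" False
      by (subst cf_nat.simps) (simp add: remainder P_eq power2_eq_square algebra_simps)
  qed
qed

lemma sum_squares_concat_replicate:
  "(\<Sum>y\<leftarrow>concat (map (\<lambda>i. replicate (ls ! i) (w i)) [0..<n]). y\<^sup>2)
     = (\<Sum>i<n. of_nat (ls ! i) * (w i)\<^sup>2 :: 'a::comm_semiring_1)"
  by (induction n) (simp_all add: sum_list_replicate)

lemma sum_squares_weight_expansion:
  assumes "a \<ge> 0"
  shows "(\<Sum>y\<leftarrow>weight_expansion a. y\<^sup>2) = a"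
proof -
  obtain p q where pq: "quotient_of a = (p, q)"
    by (cases "quotient_of a")
  have "q > 0"
    using pq quotient_of_denom_pos by blast
  have a_eq: "a = of_int p / of_int q"
    using pq quotient_of_div by blast
  with assms \<open>q > 0\<close> have "p \<ge> 0"
    by (simp add: zero_le_divide_iff)
  define ls where "ls = cf_rat a"
  have ls_eq: "ls = cf_nat (nat p) (nat q)"
    unfolding ls_def cf_rat_def pq by simp
  have "(\<Sum>y\<leftarrow>weight_expansion a. y\<^sup>2) = (\<Sum>i<length ls. of_nat (ls ! i) * (wx a i)\<^sup>2)"
    unfolding weight_expansion_def ls_def Let_def by (rule sum_squares_concat_replicate)
  also have "\<dots> = square_tiling_area a 1 ls"
    unfolding wx_def ls_def xpair_eq_euclid_pair by (rule sum_euclid_pair_eq_square_tiling_area)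
  also have "\<dots> = square_tiling_area (of_nat (nat p) * (1 / of_int q)) (of_nat (nat q) * (1 / of_int q)) ls"
    using \<open>q > 0\<close> \<open>p \<ge> 0\<close> a_eq by simp
  also have "\<dots> = of_nat (nat p) * of_nat (nat q) * (1 / of_int q)\<^sup>2"
    unfolding ls_eq by (rule square_tiling_area_cf_nat) (use \<open>q > 0\<close> in simp)
  also have "\<dots> = a"
    using \<open>q > 0\<close> \<open>p \<ge> 0\<close> a_eq by (simp add: power2_eq_square field_simps)
  finally show ?thesis .
qed

lemma sum_list_zip_mult_square_le:
  fixes f :: "'a \<Rightarrow> 'c::linordered_field" and g :: "'b \<Rightarrow> 'c"
  shows "(\<Sum>(x, y)\<leftarrow>zip xs ys. f x * g y)\<^sup>2 \<le> (\<Sum>x\<leftarrow>xs. (f x)\<^sup>2) * (\<Sum>y\<leftarrow>ys. (g y)\<^sup>2)"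
proof -
  let ?n = "min (length xs) (length ys)"
  have "(\<Sum>(x, y)\<leftarrow>zip xs ys. f x * g y) = (\<Sum>i<?n. f (xs ! i) * g (ys ! i))"
    by (simp add: sum_list_sum_nth atLeast0LessThan)
  then have "(\<Sum>(x, y)\<leftarrow>zip xs ys. f x * g y)\<^sup>2
      \<le> (\<Sum>i<?n. (f (xs ! i))\<^sup>2) * (\<Sum>i<?n. (g (ys ! i))\<^sup>2)"
    by (simp only: Cauchy_Schwarz_ineq_sum)
  also have "\<dots> \<le> (\<Sum>i<length xs. (f (xs ! i))\<^sup>2) * (\<Sum>i<length ys. (g (ys ! i))\<^sup>2)"
    by (intro mult_mono sum_mono2 sum_nonneg) auto
  also have "\<dots> = (\<Sum>x\<leftarrow>xs. (f x)\<^sup>2) * (\<Sum>y\<leftarrow>ys. (g y)\<^sup>2)"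
    by (simp add: sum_list_sum_nth atLeast0LessThan)
  finally show ?thesis .
qed

lemma sum_list_of_rat: "(\<Sum>x\<leftarrow>xs. of_rat (f x)) = of_rat (\<Sum>x\<leftarrow>xs. f x)"
  by (induction xs) (simp_all add: of_rat_add)

lemma mu_square_le:
  assumes "a \<ge> 0"
  shows "(mu d e m a)\<^sup>2 \<le> of_int (\<Sum>x\<leftarrow>m. x\<^sup>2) * of_rat a / (of_int (d + e))\<^sup>2"
proof -
  have "(\<Sum>(x, y)\<leftarrow>zip m (weight_expansion a). real_of_int x * real_of_rat y)\<^sup>2
      \<le> (\<Sum>x\<leftarrow>m. (real_of_int x)\<^sup>2) * (\<Sum>y\<leftarrow>weight_expansion a. (real_of_rat y)\<^sup>2)"
    by (rule sum_list_zip_mult_square_le)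
  also have "\<dots> = of_int (\<Sum>x\<leftarrow>m. x\<^sup>2) * of_rat a"
  proof -
    have "(\<Sum>x\<leftarrow>m. (real_of_int x)\<^sup>2) = of_int (\<Sum>x\<leftarrow>m. x\<^sup>2)"
      using sum_list_of_int[of "map (\<lambda>x. x\<^sup>2) m"] by (simp add: o_def)
    moreover have "(\<Sum>y\<leftarrow>weight_expansion a. (real_of_rat y)\<^sup>2) = of_rat a"
      using sum_list_of_rat[of "\<lambda>y. y\<^sup>2" "weight_expansion a"]
      by (simp add: of_rat_power sum_squares_weight_expansion[OF assms])
    ultimately show ?thesis by simp
  qed
  finally show ?thesis
    unfolding mu_def power_divide by (simp add: divide_right_mono)
qed

lemma E_set_sum_squares:
  assumes "(d, e, m) \<in> E_set" and "(d, e) \<noteq> (0, 0)"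
  shows "d \<ge> 0" and "e \<ge> 0" and "(\<Sum>x\<leftarrow>m. x\<^sup>2) = 2 * d * e + 1"
  using assms unfolding E_set_def by auto

theorem lemma4p5:
  fixes d e :: int and m :: "int list"
  assumes "(d, e, m) \<in> E_set"
    and "d \<ge> e"
    and "\<exists>a::rat. a \<ge> 1 \<and> mu d e m a > sqrt (real_of_rat a / 2)"
  shows "e = d \<or> e = d - 1"
proof (cases "(d, e) = (0, 0)")
  case False
  note E = E_set_sum_squares[OF assms(1) False]
  obtain a :: rat where "a \<ge> 1" and obstructive: "mu d e m a > sqrt (of_rat a / 2)"
    using assms(3) by blast
  have "of_rat a \<ge> (1::real)" and "of_int (d + e) > (0::real)"
    using \<open>a \<ge> 1\<close> E(1,2) False by auto
  have "(sqrt (of_rat a / 2))\<^sup>2 < (mu d e m a)\<^sup>2"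
    using obstructive \<open>of_rat a \<ge> 1\<close> by (intro power_strict_mono) auto
  then have "of_rat a / 2 < (mu d e m a)\<^sup>2"
    using \<open>of_rat a \<ge> 1\<close> by simp
  also have "\<dots> \<le> of_int (2 * d * e + 1) * of_rat a / (of_int (d + e))\<^sup>2"
    using mu_square_le[of a d e m] \<open>a \<ge> 1\<close> E(3) by simp
  finally have "of_rat a * of_int ((d + e)\<^sup>2) < of_rat a * real_of_int (2 * (2 * d * e + 1))"
    using \<open>of_int (d + e) > 0\<close> by (simp add: field_simps)
  then have "(d + e)\<^sup>2 < 2 * (2 * d * e + 1)"
    using \<open>of_rat a \<ge> 1\<close> by (simp only: mult_less_cancel_left_pos of_int_less_iff)
  then have "(d - e)\<^sup>2 < 2"
    by (simp add: power2_eq_square algebra_simps)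
  then show ?thesis
    using \<open>d \<ge> e\<close> by (smt (verit, best) power2_nonneg_gt_1_iff)
qed simp

end
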